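(* Let $m < n$ be positive integers. If the $m \times n$ Domineering board has outcome ${\rm 2nd}$ or $V$, then the $(n-m) \times n$ board does not have outcome $V$.
   Context: Domineering on an $a \times b$ board (a rectangle of $a$ rows and $b$ columns of unit cells): two players, Vera and Hepzibah, alternately place dominoes on empty cells; Vera places vertical dominoes (covering two vertically adjacent empty cells), Hepzibah places horizontal dominoes (covering two horizontally adjacent empty cells). A player who cannot move on her turn loses. The outcome class is $V$ if Vera wins with optimal play regardless of who moves first, $H$ if Hepzibah wins regardless of who moves first, ${\rm 1st}$ if the first player wins, and ${\rm 2nd}$ if the second player wins. *)

theory Defs
  imports Main
begin

definition board :: "nat \<Rightarrow> nat \<Rightarrow> (nat \<times> nat) set" where
  "board a b = {(i, j). i < a \<and> j < b}"

text \<open>Domino covered by a move at cell (i,j): vertical (Vera) covers (i,j),(i+1,j);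
  horizontal (Hepzibah) covers (i,j),(i,j+1).\<close>

definition domino :: "bool \<Rightarrow> nat \<times> nat \<Rightarrow> (nat \<times> nat) set" where
  "domino vera c = (if vera then {c, (fst c + 1, snd c)} else {c, (fst c, snd c + 1)})"

definition moves :: "bool \<Rightarrow> (nat \<times> nat) set \<Rightarrow> (nat \<times> nat) set set" where
  "moves vera S = {S - domino vera c | c. domino vera c \<subseteq> S}"

text \<open>wins v S: the player to move (Vera if v, else Hepzibah) wins with optimal play
  from the position with empty cells S (normal play: no move means loss).\<close>

lemma moves_card_less:
  assumes f: "finite S" and T: "T \<in> moves v S"
  shows "card T < card S"
proof -
  obtain c where c: "domino v c \<subseteq> S" "T = S - domino v c"
    using T unfolding moves_def by blast
  have ne: "domino v c \<noteq> {}" by (simp add: domino_def)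
  have "T \<subset> S" using c ne by blast
  then show ?thesis using f by (simp add: psubset_card_mono)
qed

function wins :: "bool \<Rightarrow> (nat \<times> nat) set \<Rightarrow> bool" where
  "wins v S = (if finite S then (\<exists>T\<in>moves v S. \<not> wins (\<not> v) T) else False)"
  by auto
termination
  by (relation "measure (\<lambda>(v, S). card S)") (auto simp: moves_card_less)

definition vera_first_wins :: "nat \<Rightarrow> nat \<Rightarrow> bool" where
  "vera_first_wins a b = wins True (board a b)"

definition hep_first_wins :: "nat \<Rightarrow> nat \<Rightarrow> bool" where
  "hep_first_wins a b = wins False (board a b)"

definition outcome_V :: "nat \<Rightarrow> nat \<Rightarrow> bool" where
  "outcome_V a b \<longleftrightarrow> vera_first_wins a b \<and> \<not> hep_first_wins a b"

definition outcome_H :: "nat \<Rightarrow> nat \<Rightarrow> bool" where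
  "outcome_H a b \<longleftrightarrow> \<not> vera_first_wins a b \<and> hep_first_wins a b"

definition outcome_1st :: "nat \<Rightarrow> nat \<Rightarrow> bool" where
  "outcome_1st a b \<longleftrightarrow> vera_first_wins a b \<and> hep_first_wins a b"

definition outcome_2nd :: "nat \<Rightarrow> nat \<Rightarrow> bool" where
  "outcome_2nd a b \<longleftrightarrow> \<not> vera_first_wins a b \<and> \<not> hep_first_wins a b"

end

theory Submission
  imports Defs
begin

(* Hepzibah's horizontal dominoes never cross the line between rows m-1 and m, so on the
   n x n board, cut into an m x n top and an (n-m) x n bottom, she is playing a sum of the two
   boards, while Vera may only gain by being allowed to play across the cut. If Hepzibah
   loses moving first on both parts, she loses moving first on the whole; if moreover Vera
   wins moving first on the bottom part, she wins moving first on the whole. Hence 2nd or V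
   for m x n together with V for (n-m) x n would make the square board V, which transposition
   symmetry rules out. *)

declare wins.simps [simp del]

lemma wins_iff: "finite S \<Longrightarrow> wins v S \<longleftrightarrow> (\<exists>T\<in>moves v S. \<not> wins (\<not> v) T)"
  by (simp add: wins.simps)

lemma moves_subset: "T \<in> moves v S \<Longrightarrow> T \<subseteq> S"
  unfolding moves_def by auto

lemma finite_moves: "finite S \<Longrightarrow> T \<in> moves v S \<Longrightarrow> finite T"
  by (metis moves_subset finite_subset)

lemma finite_board: "finite (board a b)"
proof -
  have "board a b \<subseteq> {..<a} \<times> {..<b}"
    unfolding board_def by auto
  then show ?thesis
    by (rule finite_subset) simp
qed

lemma moves_image:
  assumes "inj f" and dom: "\<And>c. f ` domino v c = domino w (f c)"
  shows "moves w (f ` S) = image f ` moves v S"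
proof (intro equalityI subsetI)
  fix T assume "T \<in> moves w (f ` S)"
  then obtain d where d: "domino w d \<subseteq> f ` S" "T = f ` S - domino w d"
    unfolding moves_def by blast
  moreover have "d \<in> domino w d"
    by (simp add: domino_def)
  ultimately obtain c where "d = f c"
    by blast
  then have "domino w d = f ` domino v c"
    using dom by simp
  then have "domino v c \<subseteq> S" "T = f ` (S - domino v c)"
    using d \<open>inj f\<close> by (auto simp: inj_image_subset_iff image_set_diff)
  then show "T \<in> image f ` moves v S"
    unfolding moves_def by blast
next
  fix T assume "T \<in> image f ` moves v S"
  then obtain c where "domino v c \<subseteq> S" "T = f ` (S - domino v c)"
    unfolding moves_def by blast
  with dom[of c] \<open>inj f\<close> have "domino w (f c) \<subseteq> f ` S" "T = f ` S - domino w (f c)"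
    by (auto simp: image_set_diff)
  then show "T \<in> moves w (f ` S)"
    unfolding moves_def by blast
qed

lemma wins_image:
  assumes "inj f"
    and dom: "\<And>v c. f ` domino v c = domino (p v) (f c)"
    and neg: "\<And>v. p (\<not> v) = (\<not> p v)"
  shows "finite S \<Longrightarrow> wins (p v) (f ` S) = wins v S"
proof (induction v S rule: wins.induct)
  case (1 v S)
  have "wins (\<not> p v) (f ` T) = wins (\<not> v) T" if "T \<in> moves v S" for T
    using 1(1)[OF 1(2) that finite_moves[OF 1(2) that]] neg by simp
  then show ?case
    using 1(2) moves_image[OF \<open>inj f\<close> dom] by (simp add: wins_iff)
qed

definition shift_rows :: "nat \<Rightarrow> nat \<times> nat \<Rightarrow> nat \<times> nat" where
  "shift_rows k = (\<lambda>(i, j). (i + k, j))"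

lemma wins_shift_rows: "finite S \<Longrightarrow> wins v (shift_rows k ` S) = wins v S"
  using wins_image[of "shift_rows k" id]
  by (auto simp: inj_def shift_rows_def domino_def)

lemma wins_transpose: "finite S \<Longrightarrow> wins (\<not> v) (prod.swap ` S) = wins v S"
  using wins_image[of prod.swap Not]
  by (auto simp: domino_def)

lemma board_transpose: "prod.swap ` board a b = board b a"
  by (auto simp: board_def)

lemma vera_first_wins_transpose: "vera_first_wins a b = hep_first_wins b a"
  using wins_transpose[OF finite_board, of False b a]
  by (simp add: vera_first_wins_def hep_first_wins_def board_transpose)

lemma not_outcome_V_square: "\<not> outcome_V n n"
  by (simp add: outcome_V_def vera_first_wins_transpose)

definition horizontally_separated :: "(nat \<times> nat) set \<Rightarrow> (nat \<times> nat) set \<Rightarrow> bool" where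
  "horizontally_separated X Y \<longleftrightarrow>
     X \<inter> Y = {} \<and> (\<forall>c. domino False c \<inter> X = {} \<or> domino False c \<inter> Y = {})"

lemma horizontally_separated_sym:
  "horizontally_separated X Y \<Longrightarrow> horizontally_separated Y X"
  unfolding horizontally_separated_def by blast

lemma horizontally_separated_mono:
  "horizontally_separated X Y \<Longrightarrow> X' \<subseteq> X \<Longrightarrow> Y' \<subseteq> Y \<Longrightarrow> horizontally_separated X' Y'"
  unfolding horizontally_separated_def by blast

lemma horizontally_separated_rows:
  "X \<subseteq> {c. fst c < m} \<Longrightarrow> Y \<subseteq> {c. m \<le> fst c} \<Longrightarrow> horizontally_separated X Y"
  unfolding horizontally_separated_def domino_def by fastforce

lemma moves_False_Un:
  assumes "horizontally_separated X Y" and "T \<in> moves False (X \<union> Y)"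
  obtains X' where "X' \<in> moves False X" "T = X' \<union> Y"
    | Y' where "Y' \<in> moves False Y" "T = X \<union> Y'"
proof -
  obtain c where c: "domino False c \<subseteq> X \<union> Y" "T = X \<union> Y - domino False c"
    using assms(2) unfolding moves_def by blast
  consider "domino False c \<subseteq> X" "domino False c \<inter> Y = {}"
    | "domino False c \<subseteq> Y" "domino False c \<inter> X = {}"
    using assms(1) c(1) unfolding horizontally_separated_def by blast
  then show ?thesis
    using c(2) that unfolding moves_def by cases blast+
qed

lemma Un_moves_right: "X \<inter> Y = {} \<Longrightarrow> Y' \<in> moves v Y \<Longrightarrow> X \<union> Y' \<in> moves v (X \<union> Y)"
  unfolding moves_def by blast

lemma wins_Un_horizontally_separated:
  assumes "finite X" "finite Y" "horizontally_separated X Y" "\<not> wins False X"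
  shows "(\<not> wins False Y \<longrightarrow> \<not> wins False (X \<union> Y)) \<and> (wins True Y \<longrightarrow> wins True (X \<union> Y))"
  using assms
\<comment> \<open>Vera answers in the component Hepzibah just played in; the two claims feed each other.\<close>
proof (induction "card X + card Y" arbitrary: X Y rule: less_induct)
  case less
  note finX = less.prems(1) and finY = less.prems(2) and sep = less.prems(3)
    and X_lost = less.prems(4)
  have "\<not> wins False (X \<union> Y)" if Y_lost: "\<not> wins False Y"
  proof -
    have "wins True T" if T: "T \<in> moves False (X \<union> Y)" for T
      using sep T
    proof (cases rule: moves_False_Un)
      case (1 X')
      have "wins True X'"
        using X_lost 1(1) finX by (auto simp: wins_iff)
      moreover have "horizontally_separated Y X'"
        using horizontally_separated_sym[OF sep] subset_refl moves_subset[OF 1(1)]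
        by (rule horizontally_separated_mono)
      ultimately have "wins True (Y \<union> X')"
        using less.hyps[of Y X'] moves_card_less[OF finX 1(1)] finite_moves[OF finX 1(1)]
          finY Y_lost by simp
      then show ?thesis
        using 1(2) by (simp add: Un_commute)
    next
      case (2 Y')
      have "wins True Y'"
        using Y_lost 2(1) finY by (auto simp: wins_iff)
      moreover have "horizontally_separated X Y'"
        using sep subset_refl moves_subset[OF 2(1)] by (rule horizontally_separated_mono)
      ultimately show ?thesis
        using less.hyps[of X Y'] moves_card_less[OF finY 2(1)] finite_moves[OF finY 2(1)]
          finX X_lost 2(2) by simp
    qed
    then show ?thesis
      using finX finY by (simp add: wins_iff)
  qed
  moreover have "wins True (X \<union> Y)" if "wins True Y"
  proof -
    obtain Y' where Y': "Y' \<in> moves True Y" "\<not> wins False Y'"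
      using \<open>wins True Y\<close> finY by (auto simp: wins_iff)
    have "horizontally_separated X Y'"
      using sep subset_refl moves_subset[OF Y'(1)] by (rule horizontally_separated_mono)
    then have "\<not> wins False (X \<union> Y')"
      using less.hyps[of X Y'] moves_card_less[OF finY Y'(1)] finite_moves[OF finY Y'(1)]
        finX X_lost Y'(2) by simp
    moreover have "X \<union> Y' \<in> moves True (X \<union> Y)"
      using sep Y'(1) by (simp add: horizontally_separated_def Un_moves_right)
    ultimately show ?thesis
      using finX finY by (auto simp: wins_iff)
  qed
  ultimately show ?case
    by blast
qed

lemma board_stack: "board (m + a) b = board m b \<union> shift_rows m ` board a b"
proof (intro equalityI subsetI)
  fix c assume "c \<in> board (m + a) b"
  then show "c \<in> board m b \<union> shift_rows m ` board a b"
    by (cases c) (auto simp: board_def shift_rows_def image_iff intro!: exI[of _ "fst c - m"])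
qed (auto simp: board_def shift_rows_def)

lemma outcome_V_stack:
  assumes "\<not> hep_first_wins m b" and "outcome_V a b"
  shows "outcome_V (m + a) b"
proof -
  let ?Y = "shift_rows m ` board a b"
  have "horizontally_separated (board m b) ?Y"
    by (rule horizontally_separated_rows) (auto simp: board_def shift_rows_def)
  moreover have "\<not> wins False ?Y" "wins True ?Y"
    using assms(2) by (simp_all add: wins_shift_rows finite_board outcome_V_def
        vera_first_wins_def hep_first_wins_def)
  ultimately show ?thesis
    using wins_Un_horizontally_separated[of "board m b" ?Y] assms(1) finite_board
    by (simp add: outcome_V_def vera_first_wins_def hep_first_wins_def board_stack)
qed

theorem mainTheorem12:
  fixes m n :: nat
  assumes "0 < m" and "m < n"
    and "outcome_2nd m n \<or> outcome_V m n"
  shows "\<not> outcome_V (n - m) n"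
proof
  assume "outcome_V (n - m) n"
  moreover have "\<not> hep_first_wins m n"
    using assms(3) by (auto simp: outcome_2nd_def outcome_V_def)
  ultimately have "outcome_V (m + (n - m)) n"
    by (rule outcome_V_stack[rotated])
  then show False
    using \<open>m < n\<close> not_outcome_V_square[of n] by simp
qed

end
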